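(* Let $N\subset\mathbb{R}^3$ be an open set with coordinates $(t,x,y)$ and metric $g_f^{\varepsilon}=\varepsilon\,dx^2+f(x,y)\,dy^2+2\,dt\,dy$ ($\varepsilon=\pm1$, $f$ smooth), with orthonormal frame $$e_1=\partial_x,\quad e_2=\tfrac{2-f}{2\sqrt2}\partial_t+\tfrac1{\sqrt2}\partial_y,\quad e_3=\tfrac{2+f}{2\sqrt2}\partial_t-\tfrac1{\sqrt2}\partial_y.$$ Let $\Sigma\subset N$ be a non-degenerate totally umbilical surface with unit normal $\mathcal{V}=v_1e_1+v_2e_2+v_3e_3$, where $v_i\in C^\infty(\Sigma)$ and $\varepsilon v_1^2+v_2^2-v_3^2=\delta=\pm1$, and assume $v_1\neq0$ on $\Sigma$. Then $$v_3(v_2-v_3)^2f_{xxx}=0$$ on $\Sigma$. Hence at each point of $\Sigma$ there is a small neighbourhood in which one or more of $f_{xxx}=0$, $v_3=0$, $v_2=v_3$ must occur.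
   Context: $\langle e_1,e_1\rangle=\varepsilon$, $\langle e_2,e_2\rangle=1$, $\langle e_3,e_3\rangle=-1$. A surface is non-degenerate if its induced metric is Riemannian or Lorentzian. With $\overline{\nabla}$ the Levi-Civita connection of $g_f^\varepsilon$, $\Sigma$ is totally umbilical if there is $\lambda\in C^\infty(\Sigma)$ with $-\overline{\nabla}_T\mathcal{V}=\lambda T$ for all $T$ tangent to $\Sigma$. Here $f_{xxx}$ is evaluated at the points of $\Sigma$. *)

theory Defs
  imports "HOL-Analysis.Analysis"
begin

fun Ck_on :: "nat \<Rightarrow> 'a::euclidean_space set \<Rightarrow> ('a \<Rightarrow> 'b::real_normed_vector) \<Rightarrow> bool" where
  "Ck_on 0 S h = continuous_on S h"
| "Ck_on (Suc k) S h =
     (h differentiable_on S \<and> (\<forall>b\<in>Basis. Ck_on k S (\<lambda>x. frechet_derivative h (at x) b)))"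

definition smooth_fun_on :: "'a::euclidean_space set \<Rightarrow> ('a \<Rightarrow> 'b::real_normed_vector) \<Rightarrow> bool" where
  "smooth_fun_on S h = (\<forall>k. Ck_on k S h)"

definition pd :: "'n::finite \<Rightarrow> (real^'n \<Rightarrow> 'b::real_normed_vector) \<Rightarrow> real^'n \<Rightarrow> 'b" where
  "pd i h p = frechet_derivative h (at p) (axis i 1)"

section \<open>The metric g_f^eps on R^3 with coordinates (t,x,y) = (p$1, p$2, p$3)\<close>

definition xy :: "real^3 \<Rightarrow> real^2" where
  "xy p = vector [p$2, p$3]"

definition metric_g :: "real \<Rightarrow> (real^2 \<Rightarrow> real) \<Rightarrow> real^3 \<Rightarrow> real^3^3" where
  "metric_g eps f p = (\<chi> i j. if (i = 1 \<and> j = 3) \<or> (i = 3 \<and> j = 1) then 1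
                         else if i = 2 \<and> j = 2 then eps
                         else if i = 3 \<and> j = 3 then f (xy p) else 0)"

definition gprod :: "real \<Rightarrow> (real^2 \<Rightarrow> real) \<Rightarrow> real^3 \<Rightarrow> real^3 \<Rightarrow> real^3 \<Rightarrow> real" where
  "gprod eps f p w z = w \<bullet> (metric_g eps f p *v z)"

definition christoffel :: "real \<Rightarrow> (real^2 \<Rightarrow> real) \<Rightarrow> 3 \<Rightarrow> 3 \<Rightarrow> 3 \<Rightarrow> real^3 \<Rightarrow> real" where
  "christoffel eps f k i j p =
     (1/2) * (\<Sum>l\<in>UNIV. matrix_inv (metric_g eps f p) $ k $ l *
        (pd i (\<lambda>q. metric_g eps f q $ j $ l) p + pd j (\<lambda>q. metric_g eps f q $ i $ l) p
         - pd l (\<lambda>q. metric_g eps f q $ i $ j) p))"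

definition covD :: "real \<Rightarrow> (real^2 \<Rightarrow> real) \<Rightarrow> (real^2 \<Rightarrow> real^3) \<Rightarrow> (real^2 \<Rightarrow> real^3)
                     \<Rightarrow> real^2 \<Rightarrow> real^2 \<Rightarrow> real^3" where
  "covD eps f phi V u w =
     frechet_derivative V (at u) w +
     (\<chi> k. \<Sum>i\<in>UNIV. \<Sum>j\<in>UNIV. christoffel eps f k i j (phi u)
                    * (frechet_derivative phi (at u) w) $ i * (V u) $ j)"

definition e1 :: "real^3" where "e1 = axis 2 1"

definition e2 :: "(real^2 \<Rightarrow> real) \<Rightarrow> real^3 \<Rightarrow> real^3" where
  "e2 f p = vector [(2 - f (xy p)) / (2 * sqrt 2), 0, 1 / sqrt 2]"

definition e3 :: "(real^2 \<Rightarrow> real) \<Rightarrow> real^3 \<Rightarrow> real^3" where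
  "e3 f p = vector [(2 + f (xy p)) / (2 * sqrt 2), 0, - 1 / sqrt 2]"

definition normal_field :: "(real^2 \<Rightarrow> real) \<Rightarrow> (real^2 \<Rightarrow> real^3)
     \<Rightarrow> (real^2 \<Rightarrow> real) \<Rightarrow> (real^2 \<Rightarrow> real) \<Rightarrow> (real^2 \<Rightarrow> real) \<Rightarrow> real^2 \<Rightarrow> real^3" where
  "normal_field f phi v1 v2 v3 u =
     v1 u *\<^sub>R e1 + v2 u *\<^sub>R e2 f (phi u) + v3 u *\<^sub>R e3 f (phi u)"

definition induced :: "real \<Rightarrow> (real^2 \<Rightarrow> real) \<Rightarrow> (real^2 \<Rightarrow> real^3) \<Rightarrow> real^2 \<Rightarrow> real^2 \<Rightarrow> real^2 \<Rightarrow> real" where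
  "induced eps f phi u w z =
     gprod eps f (phi u) (frechet_derivative phi (at u) w) (frechet_derivative phi (at u) z)"

definition riemannian_at where
  "riemannian_at eps f phi u = (\<forall>w. w \<noteq> 0 \<longrightarrow> induced eps f phi u w w > 0)"

text \<open>Lorentzian in dimension 2: non-degenerate of signature (1,1).\<close>
definition lorentzian_at where
  "lorentzian_at eps f phi u =
     ((\<exists>w. induced eps f phi u w w > 0) \<and> (\<exists>w. induced eps f phi u w w < 0) \<and>
      (\<forall>w. (\<forall>z. induced eps f phi u w z = 0) \<longrightarrow> w = 0))"

end

theory Submission
  imports Defs
begin

text \<open>
  Write \<open>X = x \<circ> \<phi>\<close>, \<open>Y = y \<circ> \<phi>\<close> and \<open>C = v\<^sub>2 - v\<^sub>3\<close>. The only Christoffel symbol with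
  upper index \<open>x\<close> or \<open>y\<close> that does not vanish is \<open>\<Gamma>\<^sup>x\<^sub>y\<^sub>y = -\<epsilon> f\<^sub>x / 2\<close>, so the
  \<open>y\<close>- and \<open>x\<close>-components of the umbilicity equation \<open>-\<nabla>\<^sub>T\<V> = \<lambda> T\<close> are the structure equations
  \<open>dC = -\<surd>2 \<lambda> dY\<close> and \<open>dv\<^sub>1 = k f\<^sub>x C dY - \<lambda> dX\<close> with \<open>k = \<epsilon> / (2\<surd>2)\<close>.
  Where \<open>C \<noteq> 0\<close>, the orthogonality of \<open>\<V>\<close> to the immersed surface forces \<open>dX \<and> dY \<noteq> 0\<close>.
  Applying \<open>d\<^sup>2 = 0\<close> to both structure equations gives \<open>d\<lambda> \<and> dY = 0\<close> and
  \<open>dX \<and> d\<lambda> = -k C f\<^sub>x\<^sub>x dX \<and> dY\<close>, hence \<open>d\<lambda> = -k C f\<^sub>x\<^sub>x dY\<close>; applying \<open>d\<^sup>2 = 0\<close> once more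
  (using \<open>dC \<and> dY = 0\<close>) leaves \<open>k C f\<^sub>x\<^sub>x\<^sub>x dX \<and> dY = 0\<close>.
\<close>

section \<open>Smooth functions\<close>

lemma smooth_fun_on_imp_Ck_on: "smooth_fun_on S h \<Longrightarrow> Ck_on k S h"
  by (simp add: smooth_fun_on_def)

lemma Ck_on_imp_continuous_on: "Ck_on k S h \<Longrightarrow> continuous_on S h"
  by (cases k) (simp_all add: differentiable_imp_continuous_on)

lemma Ck_on_Suc_imp_differentiable:
  "Ck_on (Suc k) S h \<Longrightarrow> open S \<Longrightarrow> x \<in> S \<Longrightarrow> h differentiable (at x)"
  by (simp add: differentiable_on_eq_differentiable_at)

lemma smooth_fun_on_imp_differentiable:
  "smooth_fun_on S h \<Longrightarrow> open S \<Longrightarrow> x \<in> S \<Longrightarrow> h differentiable (at x)"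
  using Ck_on_Suc_imp_differentiable smooth_fun_on_imp_Ck_on by blast

lemma frechet_derivative_eqI:
  assumes "(g has_derivative g') (at x)" "open S" "x \<in> S" "\<And>y. y \<in> S \<Longrightarrow> h y = g y"
  shows "frechet_derivative h (at x) = g'"
  using frechet_derivative_at has_derivative_transform_within_open[OF assms(1-3)] assms(4) by metis

lemma Ck_on_cong:
  "open S \<Longrightarrow> (\<And>x. x \<in> S \<Longrightarrow> g x = h x) \<Longrightarrow> Ck_on k S g \<Longrightarrow> Ck_on k S h"
proof (induction k arbitrary: g h)
  case 0
  then show ?case using continuous_on_eq by fastforce
next
  case (Suc k)
  have g': "(g has_derivative frechet_derivative g (at x)) (at x)" if "x \<in> S" for x
    using Suc.prems that by (simp add: differentiable_on_eq_differentiable_at frechet_derivative_works)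
  have eq: "frechet_derivative h (at x) = frechet_derivative g (at x)" if "x \<in> S" for x
    using frechet_derivative_eqI[OF g' Suc.prems(1)] Suc.prems(2) that by metis
  have "h differentiable_on S"
    using has_derivative_transform_within_open[OF g' Suc.prems(1)] Suc.prems(2)
    by (metis differentiable_at_imp_differentiable_on differentiable_def)
  moreover have "Ck_on k S (\<lambda>x. frechet_derivative h (at x) b)" if "b \<in> Basis" for b
    using Suc.IH[OF Suc.prems(1), of "\<lambda>x. frechet_derivative g (at x) b"] Suc.prems(3) that eq by simp
  ultimately show ?case by simp
qed

lemma Ck_on_subset: "open T \<Longrightarrow> T \<subseteq> S \<Longrightarrow> Ck_on k S h \<Longrightarrow> Ck_on k T h"
  by (induction k arbitrary: h) (auto intro: continuous_on_subset differentiable_on_subset)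

lemma frechet_derivative_component:
  fixes h :: "'a::real_normed_vector \<Rightarrow> real^'n"
  assumes "h differentiable (at x)"
  shows "frechet_derivative (\<lambda>y. h y $ i) (at x) v = frechet_derivative h (at x) v $ i"
    and "(\<lambda>y. h y $ i) differentiable (at x)"
proof -
  have "((\<lambda>y. h y $ i) has_derivative (\<lambda>v. frechet_derivative h (at x) v $ i)) (at x)"
    using bounded_linear.has_derivative[OF bounded_linear_vec_nth]
      assms frechet_derivative_works by blast
  then show "frechet_derivative (\<lambda>y. h y $ i) (at x) v = frechet_derivative h (at x) v $ i"
    "(\<lambda>y. h y $ i) differentiable (at x)"
    by (metis frechet_derivative_at, blast intro: differentiableI)
qed

lemma Ck_on_component:
  fixes h :: "'a::euclidean_space \<Rightarrow> real^'n"
  shows "open S \<Longrightarrow> Ck_on k S h \<Longrightarrow> Ck_on k S (\<lambda>x. h x $ i)"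
proof (induction k arbitrary: h)
  case 0
  then show ?case by (simp add: continuous_on_component)
next
  case (Suc k)
  have hx: "h differentiable (at x)" if "x \<in> S" for x
    using Ck_on_Suc_imp_differentiable Suc.prems that by blast
  have "Ck_on k S (\<lambda>x. frechet_derivative (\<lambda>y. h y $ i) (at x) b)" if "b \<in> Basis" for b
    using Ck_on_cong[OF Suc.prems(1) _ Suc.IH[OF Suc.prems(1), of "\<lambda>x. frechet_derivative h (at x) b"]]
      Suc.prems(2) that frechet_derivative_component(1)[OF hx] by simp
  moreover have "(\<lambda>x. h x $ i) differentiable_on S"
    using frechet_derivative_component(2)[OF hx] Suc.prems(1)
    by (simp add: differentiable_on_eq_differentiable_at)
  ultimately show ?case by simp
qed

lemma smooth_fun_on_component:
  fixes h :: "'a::euclidean_space \<Rightarrow> real^'n"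
  shows "open S \<Longrightarrow> smooth_fun_on S h \<Longrightarrow> smooth_fun_on S (\<lambda>x. h x $ i)"
  unfolding smooth_fun_on_def by (simp add: Ck_on_component)

lemma Ck_on_diff:
  fixes g h :: "'a::euclidean_space \<Rightarrow> real"
  shows "open S \<Longrightarrow> Ck_on k S g \<Longrightarrow> Ck_on k S h \<Longrightarrow> Ck_on k S (\<lambda>x. g x - h x)"
proof (induction k arbitrary: g h)
  case 0
  then show ?case by (simp add: continuous_on_diff)
next
  case (Suc k)
  have d: "g differentiable (at x)" "h differentiable (at x)" if "x \<in> S" for x
    using Ck_on_Suc_imp_differentiable Suc.prems that by blast+
  have "frechet_derivative (\<lambda>y. g y - h y) (at x) b
          = frechet_derivative g (at x) b - frechet_derivative h (at x) b" if "x \<in> S" for x b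
    using frechet_derivative_eqI[OF has_derivative_diff[OF d[OF that, THEN frechet_derivative_works[THEN iffD1]]]
        Suc.prems(1) that, of "\<lambda>y. g y - h y"] by simp
  then have "Ck_on k S (\<lambda>x. frechet_derivative (\<lambda>y. g y - h y) (at x) b)" if "b \<in> Basis" for b
    using Ck_on_cong[OF Suc.prems(1) _ Suc.IH[OF Suc.prems(1)]] Suc.prems(2,3) that by simp
  moreover have "(\<lambda>x. g x - h x) differentiable_on S"
    using d Suc.prems(1) by (simp add: differentiable_on_eq_differentiable_at)
  ultimately show ?case by simp
qed

lemma smooth_fun_on_diff:
  fixes g h :: "'a::euclidean_space \<Rightarrow> real"
  shows "open S \<Longrightarrow> smooth_fun_on S g \<Longrightarrow> smooth_fun_on S h \<Longrightarrow> smooth_fun_on S (\<lambda>x. g x - h x)"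
  unfolding smooth_fun_on_def by (simp add: Ck_on_diff)

lemma Ck_on_Suc_pd:
  fixes h :: "real^'n \<Rightarrow> 'b::real_normed_vector"
  assumes "Ck_on (Suc k) S h"
  shows "Ck_on k S (pd i h)"
proof -
  have "axis i (1::real) \<in> Basis" by (auto simp: Basis_vec_def)
  then show ?thesis using assms by (simp add: pd_def[abs_def])
qed

lemma pd_mult:
  fixes p q :: "real^'n \<Rightarrow> real"
  assumes "p differentiable at x" "q differentiable at x"
  shows "pd i (\<lambda>y. p y * q y) x = p x * pd i q x + pd i p x * q x"
  unfolding pd_def
    frechet_derivative_at[OF has_derivative_mult[OF assms[THEN frechet_derivative_works[THEN iffD1]]], symmetric]
  by simp

lemma smooth_fun_on_pd:
  fixes h :: "real^'n \<Rightarrow> 'b::real_normed_vector"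
  shows "smooth_fun_on S h \<Longrightarrow> smooth_fun_on S (pd i h)"
  unfolding smooth_fun_on_def using Ck_on_Suc_pd by blast

lemma continuous_on_pd:
  fixes h :: "real^'n \<Rightarrow> 'b::real_normed_vector"
  shows "Ck_on (Suc k) S h \<Longrightarrow> continuous_on S (pd i h)"
  using Ck_on_Suc_pd Ck_on_imp_continuous_on by blast

section \<open>Symmetry of second derivatives\<close>

lemma has_real_derivative_along_line:
  fixes g :: "'a::real_normed_vector \<Rightarrow> real"
  assumes "g differentiable at (p + s *\<^sub>R v)"
  shows "((\<lambda>s. g (p + s *\<^sub>R v)) has_real_derivative frechet_derivative g (at (p + s *\<^sub>R v)) v) (at s)"
proof -
  have "((\<lambda>s. p + s *\<^sub>R v) has_derivative (\<lambda>t. t *\<^sub>R v)) (at s)"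
    by (auto intro!: derivative_eq_intros)
  from diff_chain_at[OF this frechet_derivative_works[THEN iffD1, OF assms]]
  have "((\<lambda>s. g (p + s *\<^sub>R v)) has_derivative (\<lambda>t. frechet_derivative g (at (p + s *\<^sub>R v)) (t *\<^sub>R v))) (at s)"
    by (simp add: o_def)
  moreover have "(\<lambda>t. frechet_derivative g (at (p + s *\<^sub>R v)) (t *\<^sub>R v))
                   = (\<lambda>t. frechet_derivative g (at (p + s *\<^sub>R v)) v * t)"
    using linear_scale[OF linear_frechet_derivative[OF assms]] by (simp add: mult.commute)
  ultimately show ?thesis
    by (simp add: has_field_derivative_def)
qed

abbreviation second_difference :: "('a::real_vector \<Rightarrow> real) \<Rightarrow> 'a \<Rightarrow> 'a \<Rightarrow> 'a \<Rightarrow> real \<Rightarrow> real" where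
  "second_difference g a b u h \<equiv> g (u + h *\<^sub>R a + h *\<^sub>R b) - g (u + h *\<^sub>R a) - g (u + h *\<^sub>R b) + g u"

lemma second_difference_mvt:
  fixes g :: "'a::euclidean_space \<Rightarrow> real"
  assumes U: "open U" and g: "Ck_on 2 U g" and a: "a \<in> Basis" and h: "0 < h"
    and box: "\<And>s t. 0 \<le> s \<Longrightarrow> s \<le> h \<Longrightarrow> 0 \<le> t \<Longrightarrow> t \<le> h \<Longrightarrow> u + s *\<^sub>R a + t *\<^sub>R b \<in> U"
  shows "\<exists>s t. 0 < s \<and> s < h \<and> 0 < t \<and> t < h \<and> second_difference g a b u h
           = h * h * frechet_derivative (\<lambda>x. frechet_derivative g (at x) a) (at (u + s *\<^sub>R a + t *\<^sub>R b)) b"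
proof -
  let ?ga = "\<lambda>x. frechet_derivative g (at x) a"
  have dg: "g differentiable at x" and dga: "?ga differentiable at x" if "x \<in> U" for x
    using g U that a by (simp_all add: numeral_2_eq_2 differentiable_on_eq_differentiable_at)
  define \<Delta> where "\<Delta> s = g (u + h *\<^sub>R b + s *\<^sub>R a) - g (u + s *\<^sub>R a)" for s
  have "(\<Delta> has_real_derivative ?ga (u + h *\<^sub>R b + s *\<^sub>R a) - ?ga (u + s *\<^sub>R a)) (at s)"
    if "0 \<le> s" "s \<le> h" for s
    unfolding \<Delta>_def using box[of s h] box[of s 0] that h
    by (intro DERIV_diff has_real_derivative_along_line dg) (simp_all add: algebra_simps)
  from MVT2[OF h this] obtain s where s: "0 < s" "s < h"
    "\<Delta> h - \<Delta> 0 = h * (?ga (u + s *\<^sub>R a + h *\<^sub>R b) - ?ga (u + s *\<^sub>R a + 0 *\<^sub>R b))"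
    by (auto simp: algebra_simps)
  have "((\<lambda>t. ?ga (u + s *\<^sub>R a + t *\<^sub>R b)) has_real_derivative
          frechet_derivative ?ga (at (u + s *\<^sub>R a + t *\<^sub>R b)) b) (at t)" if "0 \<le> t" "t \<le> h" for t
    using box[of s t] that s by (intro has_real_derivative_along_line dga) simp
  from MVT2[OF h this] obtain t where "0 < t" "t < h"
    "?ga (u + s *\<^sub>R a + h *\<^sub>R b) - ?ga (u + s *\<^sub>R a + 0 *\<^sub>R b)
       = h * frechet_derivative ?ga (at (u + s *\<^sub>R a + t *\<^sub>R b)) b"
    by auto
  moreover have "\<Delta> h - \<Delta> 0 = second_difference g a b u h"
    unfolding \<Delta>_def by (simp add: algebra_simps)
  ultimately show ?thesis using s by (intro exI[of _ s] exI[of _ t]) simp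
qed

lemma second_difference_tendsto:
  fixes g :: "'a::euclidean_space \<Rightarrow> real"
  assumes U: "open U" and u: "u \<in> U" and g: "Ck_on 2 U g" and a: "a \<in> Basis" and b: "b \<in> Basis"
  shows "((\<lambda>h. second_difference g a b u h / (h * h)) \<longlongrightarrow>
           frechet_derivative (\<lambda>x. frechet_derivative g (at x) a) (at u) b) (at_right 0)"
proof (rule tendstoI)
  let ?gab = "\<lambda>x. frechet_derivative (\<lambda>x. frechet_derivative g (at x) a) (at x) b"
  fix e :: real assume "e > 0"
  have "continuous_on U ?gab"
    using g a b by (simp add: numeral_2_eq_2)
  then obtain d1 where "d1 > 0" "\<And>x. x \<in> U \<Longrightarrow> dist x u < d1 \<Longrightarrow> dist (?gab x) (?gab u) < e"
    using \<open>e > 0\<close> u unfolding continuous_on_iff by blast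
  moreover obtain d2 where "d2 > 0" "ball u d2 \<subseteq> U"
    using U u open_contains_ball by blast
  ultimately obtain d where d: "d > 0" "ball u d \<subseteq> U" "\<And>x. x \<in> ball u d \<Longrightarrow> dist (?gab x) (?gab u) < e"
    by (intro that[of "min d1 d2"]) (auto simp: dist_commute subset_iff)
  have near: "u + s *\<^sub>R a + t *\<^sub>R b \<in> ball u d" if "0 \<le> s" "s \<le> h" "0 \<le> t" "t \<le> h" "h < d / 2"
    for s t h
  proof -
    have "norm (s *\<^sub>R a + t *\<^sub>R b) \<le> s + t"
      using norm_triangle_ineq[of "s *\<^sub>R a" "t *\<^sub>R b"] that a b by simp
    moreover have "dist u (u + s *\<^sub>R a + t *\<^sub>R b) = norm (s *\<^sub>R a + t *\<^sub>R b)"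
      by (simp add: dist_norm norm_minus_commute algebra_simps)
    ultimately show ?thesis using that by simp
  qed
  have "\<forall>\<^sub>F h in at_right 0. 0 < h \<and> h < d / 2"
    using eventually_at_rightI[of 0 "d / 2"] \<open>d > 0\<close> by auto
  then show "\<forall>\<^sub>F h in at_right 0. dist (second_difference g a b u h / (h * h)) (?gab u) < e"
  proof (rule eventually_mono, safe)
    fix h :: real assume "0 < h" "h < d / 2"
    then obtain s t where st: "0 < s" "s < h" "0 < t" "t < h"
      "second_difference g a b u h = h * h * ?gab (u + s *\<^sub>R a + t *\<^sub>R b)"
      using second_difference_mvt[OF U g a, of h u b] near d(2) by blast
    then show "dist (second_difference g a b u h / (h * h)) (?gab u) < e"
      using d(3)[OF near[of s h t]] \<open>h < d / 2\<close> by simp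
  qed
qed

lemma frechet_derivative_second_symmetric:
  fixes g :: "'a::euclidean_space \<Rightarrow> real"
  assumes "open U" "u \<in> U" "Ck_on 2 U g" "a \<in> Basis" "b \<in> Basis"
  shows "frechet_derivative (\<lambda>x. frechet_derivative g (at x) a) (at u) b
       = frechet_derivative (\<lambda>x. frechet_derivative g (at x) b) (at u) a"
proof -
  have "second_difference g b a u h = second_difference g a b u h" for h
    by (simp add: ac_simps)
  then have "((\<lambda>h. second_difference g a b u h / (h * h)) \<longlongrightarrow>
           frechet_derivative (\<lambda>x. frechet_derivative g (at x) b) (at u) a) (at_right 0)"
    using second_difference_tendsto[OF assms(1-3,5,4)] by (simp add: diff_diff_eq add.commute)
  then show ?thesis
    using second_difference_tendsto[OF assms] tendsto_unique trivial_limit_at_right_real by blast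
qed

corollary pd_pd_commute:
  fixes g :: "real^'n \<Rightarrow> real"
  assumes "open U" "u \<in> U" "Ck_on 2 U g"
  shows "pd i (pd j g) u = pd j (pd i g) u"
  unfolding pd_def[abs_def]
  by (rule frechet_derivative_second_symmetric[OF assms]) (auto simp: Basis_vec_def)

section \<open>Jacobians of pairs of functions of two variables\<close>

text \<open>\<open>jacobian2 p q\<close> is the coefficient of \<open>dp \<and> dq\<close> with respect to \<open>dx\<^sub>1 \<and> dx\<^sub>2\<close>.\<close>
definition jacobian2 :: "(real^2 \<Rightarrow> real) \<Rightarrow> (real^2 \<Rightarrow> real) \<Rightarrow> real^2 \<Rightarrow> real" where
  "jacobian2 p q x = pd 1 p x * pd 2 q x - pd 2 p x * pd 1 q x"

lemma continuous_on_jacobian2: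
  "Ck_on (Suc k) S p \<Longrightarrow> Ck_on (Suc k) S q \<Longrightarrow> continuous_on S (jacobian2 p q)"
  unfolding jacobian2_def[abs_def] by (intro continuous_intros continuous_on_pd)

lemma jacobian2_swap: "jacobian2 q p x = - jacobian2 p q x"
  by (simp add: jacobian2_def)

lemma jacobian2_const [simp]: "jacobian2 (\<lambda>_. c) q x = 0"
  by (simp add: jacobian2_def pd_def)

lemma jacobian2_mult:
  assumes "p differentiable at x" "q differentiable at x"
  shows "jacobian2 (\<lambda>y. p y * q y) s x = p x * jacobian2 q s x + q x * jacobian2 p s x"
  by (simp add: jacobian2_def pd_mult[OF assms] algebra_simps)

lemma jacobian2_const_mult:
  assumes "p differentiable at x"
  shows "jacobian2 (\<lambda>y. c * p y) s x = c * jacobian2 p s x"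
  using jacobian2_mult[of "\<lambda>_. c", OF _ assms] by simp

lemma jacobian2_minus:
  assumes "p differentiable at x"
  shows "jacobian2 (\<lambda>y. - p y) s x = - jacobian2 p s x"
  using jacobian2_const_mult[OF assms, of "-1"] by simp

lemma jacobian2_proportional:
  "(\<And>i. pd i p x = m * pd i q x) \<Longrightarrow> jacobian2 p q x = 0"
  by (simp add: jacobian2_def)

lemma pd_proportional_of_jacobian2:
  assumes "jacobian2 X Y x \<noteq> 0" "jacobian2 l Y x = 0" "jacobian2 X l x = m * jacobian2 X Y x"
  shows "pd i l x = m * pd i Y x"
proof -
  have "jacobian2 X Y x * (pd j l x - m * pd j Y x) - pd j X x * jacobian2 l Y x
          = pd j Y x * (jacobian2 X l x - m * jacobian2 X Y x)" for j
    using exhaust_2[of j] unfolding jacobian2_def by (elim disjE) (simp_all add: algebra_simps)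
  then show ?thesis using assms by simp
qed

text \<open>The coordinate form of \<open>d(dh) = 0\<close> for \<open>dh = p dq - r ds\<close>.\<close>
lemma jacobian2_eq_of_exact:
  fixes h p q r s :: "real^2 \<Rightarrow> real"
  assumes U: "open U" "x \<in> U" and C2: "Ck_on 2 U h" "Ck_on 2 U q" "Ck_on 2 U s"
    and dp: "p differentiable at x" and dr: "r differentiable at x"
    and dh: "\<And>y i. y \<in> U \<Longrightarrow> pd i h y = p y * pd i q y - r y * pd i s y"
  shows "jacobian2 p q x = jacobian2 r s x"
proof -
  have d1: "pd i g differentiable at x" if "Ck_on 2 U g" for i and g :: "real^2 \<Rightarrow> real"
    using Ck_on_Suc_imp_differentiable[OF Ck_on_Suc_pd[of "Suc 0", folded numeral_2_eq_2, OF that] U] .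
  have second: "pd j (pd i h) x = p x * pd j (pd i q) x + pd j p x * pd i q x
                                 - (r x * pd j (pd i s) x + pd j r x * pd i s x)" for i j
  proof -
    have "((\<lambda>y. p y * pd i q y - r y * pd i s y) has_derivative
          (\<lambda>v. p x * frechet_derivative (pd i q) (at x) v + frechet_derivative p (at x) v * pd i q x
             - (r x * frechet_derivative (pd i s) (at x) v + frechet_derivative r (at x) v * pd i s x))) (at x)"
      using dp dr d1[OF C2(2)] d1[OF C2(3)]
      by (auto intro!: derivative_eq_intros dest!: frechet_derivative_works[THEN iffD1])
    from frechet_derivative_eqI[OF this U dh] show ?thesis
      by (simp add: pd_def[of j])
  qed
  have "pd 2 (pd 1 g) x = pd 1 (pd 2 g) x" if "Ck_on 2 U g" for g :: "real^2 \<Rightarrow> real"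
    by (rule pd_pd_commute[OF U that])
  note commute = this[OF C2(1)] this[OF C2(2)] this[OF C2(3)]
  show ?thesis
    using second[of 1 2] second[of 2 1] unfolding jacobian2_def commute by linarith
qed

corollary jacobian2_eq_zero_of_exact:
  fixes h p q :: "real^2 \<Rightarrow> real"
  assumes "open U" "x \<in> U" "Ck_on 2 U h" "Ck_on 2 U q" "p differentiable at x"
    and "\<And>y i. y \<in> U \<Longrightarrow> pd i h y = p y * pd i q y"
  shows "jacobian2 p q x = 0"
  using jacobian2_eq_of_exact[OF assms(1-4,4,5), of "\<lambda>_. 0"] assms(6) by simp

section \<open>The metric \<open>g\<^sub>f\<^sup>\<epsilon>\<close> and its Levi-Civita connection\<close>

lemma linear_xy: "linear xy"
  unfolding xy_def by (rule linearI) (auto simp: vec_eq_iff forall_2)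

lemma xy_eq: "xy w = (w$2) *\<^sub>R axis 1 1 + (w$3) *\<^sub>R axis 2 1"
  unfolding xy_def by (auto simp: vec_eq_iff forall_2 axis_def)

lemma open_xy_image: "open N \<Longrightarrow> open (xy ` N)"
proof (rule open_surjective_linear_image[OF _ linear_xy])
  show "surj xy"
  proof (rule surjI)
    fix z :: "real^2"
    show "xy (vector [0, z$1, z$2]) = z"
      unfolding xy_def by (auto simp: vec_eq_iff forall_2)
  qed
qed

lemma pd_comp_xy:
  fixes h :: "real^2 \<Rightarrow> real" and phi :: "real^2 \<Rightarrow> real^3"
  assumes h: "h differentiable at (xy (phi u))" and phi: "phi differentiable at u"
  shows "pd i (\<lambda>y. h (xy (phi y))) u
           = pd i (\<lambda>y. phi y $ 2) u * pd 1 h (xy (phi u)) + pd i (\<lambda>y. phi y $ 3) u * pd 2 h (xy (phi u))"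
    and "(\<lambda>y. h (xy (phi y))) differentiable at u"
proof -
  let ?dphi = "frechet_derivative phi (at u)" and ?dh = "frechet_derivative h (at (xy (phi u)))"
  have "((\<lambda>y. xy (phi y)) has_derivative (\<lambda>w. xy (?dphi w))) (at u)"
    using linear_xy phi
    by (auto intro: bounded_linear.has_derivative simp: linear_conv_bounded_linear frechet_derivative_works)
  from diff_chain_at[OF this h[unfolded frechet_derivative_works]]
  have hphi: "((\<lambda>y. h (xy (phi y))) has_derivative (\<lambda>w. ?dh (xy (?dphi w)))) (at u)"
    by (simp add: o_def)
  then show "(\<lambda>y. h (xy (phi y))) differentiable at u"
    using differentiableI by blast
  have "linear ?dh" by (rule linear_frechet_derivative[OF h])
  then have "?dh (xy (?dphi w)) = ?dphi w $ 2 * pd 1 h (xy (phi u)) + ?dphi w $ 3 * pd 2 h (xy (phi u))" for w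
    unfolding xy_eq[of "?dphi w"] pd_def by (simp add: linear_add linear_scale)
  with frechet_derivative_at[OF hphi] show "pd i (\<lambda>y. h (xy (phi y))) u
           = pd i (\<lambda>y. phi y $ 2) u * pd 1 h (xy (phi u)) + pd i (\<lambda>y. phi y $ 3) u * pd 2 h (xy (phi u))"
    unfolding pd_def[of i] frechet_derivative_component(1)[OF phi] by metis
qed

lemma jacobian2_comp_xy:
  fixes h :: "real^2 \<Rightarrow> real" and phi :: "real^2 \<Rightarrow> real^3"
  assumes "h differentiable at (xy (phi u))" "phi differentiable at u"
  shows "jacobian2 (\<lambda>y. h (xy (phi y))) (\<lambda>y. phi y $ 3) u
           = pd 1 h (xy (phi u)) * jacobian2 (\<lambda>y. phi y $ 2) (\<lambda>y. phi y $ 3) u"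
  unfolding jacobian2_def pd_comp_xy(1)[OF assms] by (simp add: algebra_simps)

lemma matrix_inv_eqI:
  fixes A B :: "real^'n^'n"
  assumes "A ** B = mat 1" "B ** A = mat 1"
  shows "matrix_inv A = B"
  unfolding matrix_inv_def
proof (rule some_equality)
  show "A ** B = mat 1 \<and> B ** A = mat 1" using assms by simp
  fix B' assume "A ** B' = mat 1 \<and> B' ** A = mat 1"
  then show "B' = B"
    by (metis assms(1) matrix_mul_assoc matrix_mul_lid matrix_mul_rid)
qed

lemma matrix_inv_metric_g:
  assumes "eps = 1 \<or> eps = -1"
  shows "matrix_inv (metric_g eps f p)
           = (\<chi> i j. if i = 1 \<and> j = 1 then - f (xy p) else if (i = 1 \<and> j = 3) \<or> (i = 3 \<and> j = 1) then 1
                     else if i = 2 \<and> j = 2 then eps else 0)"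
proof (rule matrix_inv_eqI)
  have "eps * eps = 1" using assms by auto
  then show "metric_g eps f p ** (\<chi> i j. if i = 1 \<and> j = 1 then - f (xy p)
                     else if (i = 1 \<and> j = 3) \<or> (i = 3 \<and> j = 1) then 1
                     else if i = 2 \<and> j = 2 then eps else 0) = mat 1"
    and "(\<chi> i j. if i = 1 \<and> j = 1 then - f (xy p) else if (i = 1 \<and> j = 3) \<or> (i = 3 \<and> j = 1) then 1
                     else if i = 2 \<and> j = 2 then eps else 0) ** metric_g eps f p = mat 1"
    by (simp_all add: metric_g_def matrix_matrix_mult_def mat_def vec_eq_iff forall_3 sum_3)
qed

lemma xy_axis: "xy (axis 1 1) = 0" "xy (axis 2 1) = axis 1 1" "xy (axis 3 1) = axis 2 1"
  by (auto simp: xy_def vec_eq_iff forall_2 axis_def)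

lemma pd_metric_g:
  assumes "f differentiable at (xy p)"
  shows "pd k (\<lambda>q. metric_g eps f q $ i $ j) p
           = (if i = 3 \<and> j = 3 then frechet_derivative f (at (xy p)) (xy (axis k 1)) else 0)"
proof (cases "i = 3 \<and> j = 3")
  case True
  have "(xy has_derivative xy) (at p)"
    using linear_xy by (simp add: bounded_linear_imp_has_derivative linear_conv_bounded_linear)
  from diff_chain_at[OF this assms[unfolded frechet_derivative_works]]
  have "((\<lambda>q. f (xy q)) has_derivative (\<lambda>w. frechet_derivative f (at (xy p)) (xy w))) (at p)"
    by (simp add: o_def)
  moreover have "(\<lambda>q. metric_g eps f q $ i $ j) = (\<lambda>q. f (xy q))"
    using True by (simp add: metric_g_def)
  ultimately show ?thesis
    using True unfolding pd_def by (metis frechet_derivative_at)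
next
  case False
  then have "(\<lambda>q. metric_g eps f q $ i $ j) = (\<lambda>q. metric_g eps f 0 $ i $ j)"
    by (auto simp: metric_g_def)
  then show ?thesis
    using False unfolding pd_def by (simp only: frechet_derivative_const if_False)
qed

lemma christoffel_3:
  assumes "eps = 1 \<or> eps = -1" "f differentiable at (xy p)"
  shows "christoffel eps f 3 i j p = 0"
  using linear_0[OF linear_frechet_derivative[OF assms(2)]]
  unfolding christoffel_def matrix_inv_metric_g[OF assms(1)] pd_metric_g[OF assms(2)]
  by (simp add: sum_3 xy_axis)

lemma christoffel_2:
  assumes "eps = 1 \<or> eps = -1" "f differentiable at (xy p)"
  shows "christoffel eps f 2 i j p = (if i = 3 \<and> j = 3 then - (eps / 2) * pd 1 f (xy p) else 0)"
  using linear_0[OF linear_frechet_derivative[OF assms(2)]]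
  unfolding christoffel_def matrix_inv_metric_g[OF assms(1)] pd_metric_g[OF assms(2)]
  by (simp add: sum_3 xy_axis pd_def)

lemma covD_nth_3:
  assumes "eps = 1 \<or> eps = -1" "f differentiable at (xy (phi u))"
  shows "covD eps f phi V u w $ 3 = frechet_derivative V (at u) w $ 3"
  unfolding covD_def by (simp add: christoffel_3[OF assms])

lemma covD_nth_2:
  assumes "eps = 1 \<or> eps = -1" "f differentiable at (xy (phi u))"
  shows "covD eps f phi V u w $ 2 = frechet_derivative V (at u) w $ 2
           - eps / 2 * pd 1 f (xy (phi u)) * frechet_derivative phi (at u) w $ 3 * V u $ 3"
  unfolding covD_def by (simp add: christoffel_2[OF assms] sum_3)

lemma gprod_expand:
  "gprod eps f p V W = V$1 * W$3 + eps * V$2 * W$2 + V$3 * (W$1 + f (xy p) * W$3)"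
  by (simp add: gprod_def metric_g_def inner_vec_def matrix_vector_mult_def sum_3 algebra_simps)

lemma normal_field_nth:
  "normal_field f phi v1 v2 v3 u $ 2 = v1 u"
  "normal_field f phi v1 v2 v3 u $ 3 = (v2 u - v3 u) / sqrt 2"
  by (simp_all add: normal_field_def e1_def e2_def e3_def axis_def diff_divide_distrib)

lemma normal_field_differentiable:
  assumes "v1 differentiable at u" "v2 differentiable at u" "v3 differentiable at u"
    and "f differentiable at (xy (phi u))" "phi differentiable at u"
  shows "normal_field f phi v1 v2 v3 differentiable at u"
proof -
  have "normal_field f phi v1 v2 v3 = (\<lambda>y. v1 y *\<^sub>R e1
      + v2 y *\<^sub>R (((2 - f (xy (phi y))) / (2 * sqrt 2)) *\<^sub>R axis 1 1 + (1 / sqrt 2) *\<^sub>R axis 3 1)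
      + v3 y *\<^sub>R (((2 + f (xy (phi y))) / (2 * sqrt 2)) *\<^sub>R axis 1 1 + (- 1 / sqrt 2) *\<^sub>R axis 3 1))"
    by (simp add: fun_eq_iff normal_field_def e2_def e3_def vec_eq_iff forall_3 axis_def)
  then show ?thesis
    using assms pd_comp_xy(2)[OF assms(4,5)] by simp
qed

section \<open>Structure equations of a totally umbilical surface\<close>

lemma umbilic_pd_equations:
  fixes phi :: "real^2 \<Rightarrow> real^3" and f v1 v2 v3 :: "real^2 \<Rightarrow> real"
  assumes eps: "eps = 1 \<or> eps = -1" and f: "f differentiable at (xy (phi u))"
    and phi: "phi differentiable at u"
    and v: "v1 differentiable at u" "v2 differentiable at u" "v3 differentiable at u"
    and umbilic: "- covD eps f phi (normal_field f phi v1 v2 v3) u (axis i 1)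
                    = lam *\<^sub>R frechet_derivative phi (at u) (axis i 1)"
  shows "pd i (\<lambda>y. v2 y - v3 y) u = - sqrt 2 * lam * pd i (\<lambda>y. phi y $ 3) u"
    and "pd i v1 u = eps / (2 * sqrt 2) * pd 1 f (xy (phi u)) * (v2 u - v3 u) * pd i (\<lambda>y. phi y $ 3) u
                     - lam * pd i (\<lambda>y. phi y $ 2) u"
proof -
  let ?V = "normal_field f phi v1 v2 v3"
  have dV: "?V differentiable at u"
    by (rule normal_field_differentiable[OF v f phi])
  have C': "((\<lambda>y. (v2 y - v3 y) / sqrt 2) has_derivative
         (\<lambda>w. frechet_derivative (\<lambda>y. v2 y - v3 y) (at u) w / sqrt 2)) (at u)"
    using v by (intro bounded_linear.has_derivative[OF bounded_linear_divide])
      (simp add: frechet_derivative_works[symmetric])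
  have V3: "frechet_derivative ?V (at u) (axis i 1) $ 3 = pd i (\<lambda>y. v2 y - v3 y) u / sqrt 2"
    unfolding frechet_derivative_component(1)[OF dV, symmetric] normal_field_nth pd_def
    by (simp add: frechet_derivative_at[OF C', symmetric])
  have V2: "frechet_derivative ?V (at u) (axis i 1) $ 2 = pd i v1 u"
    unfolding frechet_derivative_component(1)[OF dV, symmetric] normal_field_nth pd_def ..
  have dphi: "frechet_derivative phi (at u) (axis i 1) $ k = pd i (\<lambda>y. phi y $ k) u" for k
    unfolding frechet_derivative_component(1)[OF phi] pd_def ..
  have "- (pd i (\<lambda>y. v2 y - v3 y) u / sqrt 2) = lam * pd i (\<lambda>y. phi y $ 3) u"
    using arg_cong[OF umbilic, of "\<lambda>z. z $ 3"] by (simp add: covD_nth_3[of eps f phi u, OF eps f] V3 dphi)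
  then show "pd i (\<lambda>y. v2 y - v3 y) u = - sqrt 2 * lam * pd i (\<lambda>y. phi y $ 3) u"
    by (simp add: field_simps)
  have "- (pd i v1 u - eps / 2 * pd 1 f (xy (phi u)) * pd i (\<lambda>y. phi y $ 3) u * ((v2 u - v3 u) / sqrt 2))
          = lam * pd i (\<lambda>y. phi y $ 2) u"
    using arg_cong[OF umbilic, of "\<lambda>z. z $ 2"]
    by (simp add: covD_nth_2[of eps f phi u, OF eps f] V2 dphi normal_field_nth)
  then show "pd i v1 u = eps / (2 * sqrt 2) * pd 1 f (xy (phi u)) * (v2 u - v3 u) * pd i (\<lambda>y. phi y $ 3) u
                     - lam * pd i (\<lambda>y. phi y $ 2) u"
    by (simp add: field_simps)
qed

lemma jacobian2_nonzero_of_normal: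
  fixes phi :: "real^2 \<Rightarrow> real^3"
  assumes phi: "phi differentiable at u" and inj: "inj (frechet_derivative phi (at u))"
    and normal: "\<And>w. gprod eps f (phi u) V (frechet_derivative phi (at u) w) = 0"
    and V3: "V $ 3 \<noteq> 0"
  shows "jacobian2 (\<lambda>y. phi y $ 2) (\<lambda>y. phi y $ 3) u \<noteq> 0"
proof
  let ?L = "frechet_derivative phi (at u)"
  assume "jacobian2 (\<lambda>y. phi y $ 2) (\<lambda>y. phi y $ 3) u = 0"
  then have "det (matrix (xy \<circ> ?L)) = 0"
    unfolding det_2 matrix_def jacobian2_def pd_def frechet_derivative_component(1)[OF phi]
    by (simp add: xy_def)
  moreover have lin: "linear ?L" by (rule linear_frechet_derivative[OF phi])
  then have lin_xy: "linear (xy \<circ> ?L)" using linear_compose linear_xy by blast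
  ultimately have "\<not> inj (xy \<circ> ?L)"
    using det_nz_iff_inj by blast
  then obtain w where "w \<noteq> 0" "xy (?L w) = 0"
    using linear_inj_iff_eq_0[OF lin_xy] by auto
  then have "?L w $ 2 = 0" "?L w $ 3 = 0"
    unfolding xy_def by (simp_all add: vec_eq_iff forall_2)
  moreover from this have "?L w $ 1 = 0"
    using normal[of w] V3 by (simp add: gprod_expand)
  ultimately have "?L w = ?L 0"
    using linear_0[OF lin] by (simp add: vec_eq_iff forall_3)
  then show False using inj \<open>w \<noteq> 0\<close> by (meson injD)
qed

section \<open>Integrability of the structure equations\<close>

locale umbilic_structure_equations =
  fixes U W :: "(real^2) set" and phi :: "real^2 \<Rightarrow> real^3" and f v1 C lam :: "real^2 \<Rightarrow> real"
    and c k :: real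
  assumes open_U: "open U" and open_W: "open W" and phi_W: "\<And>y. y \<in> U \<Longrightarrow> xy (phi y) \<in> W"
    and f_smooth: "smooth_fun_on W f" and phi_smooth: "smooth_fun_on U phi"
    and v1_smooth: "smooth_fun_on U v1" and C_smooth: "smooth_fun_on U C"
    and lam_smooth: "smooth_fun_on U lam" and c_nonzero: "c \<noteq> 0"
    and pd_C: "\<And>y i. y \<in> U \<Longrightarrow> pd i C y = c * lam y * pd i (\<lambda>y. phi y $ 3) y"
    and pd_v1: "\<And>y i. y \<in> U \<Longrightarrow> pd i v1 y
                  = k * pd 1 f (xy (phi y)) * C y * pd i (\<lambda>y. phi y $ 3) y - lam y * pd i (\<lambda>y. phi y $ 2) y"
begin

abbreviation X :: "real^2 \<Rightarrow> real" where "X \<equiv> \<lambda>y. phi y $ 2"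
abbreviation Y :: "real^2 \<Rightarrow> real" where "Y \<equiv> \<lambda>y. phi y $ 3"

lemma smooth_X: "smooth_fun_on U X" and smooth_Y: "smooth_fun_on U Y"
  using smooth_fun_on_component[OF open_U phi_smooth] by auto

lemma differentiable_at_U:
  assumes "y \<in> U"
  shows "lam differentiable at y" "C differentiable at y"
    and "(\<lambda>y. pd 1 f (xy (phi y))) differentiable at y"
    and "(\<lambda>y. pd 1 (pd 1 f) (xy (phi y))) differentiable at y"
    and "pd 1 f differentiable at (xy (phi y))"
    and "pd 1 (pd 1 f) differentiable at (xy (phi y))"
    and "phi differentiable at y"
  using assms phi_W open_U open_W
  by (auto intro!: smooth_fun_on_imp_differentiable pd_comp_xy(2) smooth_fun_on_pd
      lam_smooth C_smooth f_smooth phi_smooth)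

lemma jacobian2_lam_Y: "y \<in> U \<Longrightarrow> jacobian2 lam Y y = 0"
  using jacobian2_eq_zero_of_exact[OF open_U _ smooth_fun_on_imp_Ck_on[OF C_smooth]
      smooth_fun_on_imp_Ck_on[OF smooth_Y], of y "\<lambda>y. c * lam y"]
    pd_C differentiable_at_U jacobian2_const_mult c_nonzero
  by (simp add: differentiable_mult)

lemma jacobian2_X_lam:
  assumes "y \<in> U"
  shows "jacobian2 X lam y = - k * C y * pd 1 (pd 1 f) (xy (phi y)) * jacobian2 X Y y"
proof -
  have "jacobian2 (\<lambda>y. k * pd 1 f (xy (phi y)) * C y) Y y = jacobian2 lam X y"
  proof (rule jacobian2_eq_of_exact[OF open_U assms])
    show "Ck_on 2 U v1" "Ck_on 2 U Y" "Ck_on 2 U X"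
      using smooth_fun_on_imp_Ck_on v1_smooth smooth_X smooth_Y by blast+
    show "(\<lambda>y. k * pd 1 f (xy (phi y)) * C y) differentiable at y" "lam differentiable at y"
      using differentiable_at_U[OF assms] by (auto intro!: differentiable_mult)
  qed (rule pd_v1)
  moreover have "jacobian2 C Y y = 0"
    using pd_C[OF assms] by (rule jacobian2_proportional)
  ultimately show ?thesis
    using differentiable_at_U[OF assms]
    by (simp add: jacobian2_mult jacobian2_const_mult jacobian2_comp_xy jacobian2_swap[of X lam])
      (simp add: ac_simps)
qed

lemma pd_lam:
  assumes "y \<in> U" "jacobian2 X Y y \<noteq> 0"
  shows "pd i lam y = - k * C y * pd 1 (pd 1 f) (xy (phi y)) * pd i Y y"
  using pd_proportional_of_jacobian2 assms jacobian2_lam_Y jacobian2_X_lam by blast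

lemma third_derivative_vanishes:
  assumes "u \<in> U" "jacobian2 X Y u \<noteq> 0"
  shows "k * C u * pd 1 (pd 1 (pd 1 f)) (xy (phi u)) = 0"
proof -
  define U' where "U' = {y \<in> U. jacobian2 X Y y \<noteq> 0}"
  have "continuous_on U (jacobian2 X Y)"
    using continuous_on_jacobian2[of 0] smooth_X smooth_Y smooth_fun_on_imp_Ck_on by blast
  moreover have "U' = U \<inter> jacobian2 X Y -` (-{0})"
    unfolding U'_def by auto
  ultimately have "open U'"
    by (simp add: continuous_open_preimage open_U open_Compl)
  have "U' \<subseteq> U" unfolding U'_def by auto
  then have C2: "Ck_on 2 U' lam" "Ck_on 2 U' Y"
    using Ck_on_subset[OF \<open>open U'\<close>] smooth_fun_on_imp_Ck_on lam_smooth smooth_Y by blast+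
  have "jacobian2 (\<lambda>y. - k * C y * pd 1 (pd 1 f) (xy (phi y))) Y u = 0"
    using jacobian2_eq_zero_of_exact[OF \<open>open U'\<close> _ C2] pd_lam assms differentiable_at_U[OF assms(1)]
    unfolding U'_def by (simp add: differentiable_mult)
  moreover have "jacobian2 C Y u = 0"
    using pd_C[OF assms(1)] by (rule jacobian2_proportional)
  ultimately have "- k * C u * pd 1 (pd 1 (pd 1 f)) (xy (phi u)) * jacobian2 X Y u = 0"
    using differentiable_at_U[OF assms(1)]
    by (simp add: jacobian2_minus jacobian2_mult jacobian2_const_mult jacobian2_comp_xy differentiable_mult)
  then show ?thesis using assms(2) by simp
qed

end

theorem mainTheorem3:
  fixes N :: "(real^3) set" and eps delta :: real and f :: "real^2 \<Rightarrow> real"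
    and U :: "(real^2) set" and phi :: "real^2 \<Rightarrow> real^3"
    and v1 v2 v3 lam :: "real^2 \<Rightarrow> real"
  assumes N_open: "open N"
    and eps: "eps = 1 \<or> eps = -1"
    and f_smooth: "smooth_fun_on (xy ` N) f"
    and U_open: "open U"
    and phi_smooth: "smooth_fun_on U phi"
    and phi_N: "phi ` U \<subseteq> N"
    and immersion: "\<forall>u\<in>U. inj (frechet_derivative phi (at u))"
    and nondeg: "\<forall>u\<in>U. riemannian_at eps f phi u \<or> lorentzian_at eps f phi u"
    and v_smooth: "smooth_fun_on U v1" "smooth_fun_on U v2" "smooth_fun_on U v3"
    and delta: "delta = 1 \<or> delta = -1"
    and unit: "\<forall>u\<in>U. eps * (v1 u)^2 + (v2 u)^2 - (v3 u)^2 = delta"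
    and normal: "\<forall>u\<in>U. \<forall>w. gprod eps f (phi u) (normal_field f phi v1 v2 v3 u)
                                 (frechet_derivative phi (at u) w) = 0"
    and lam_smooth: "smooth_fun_on U lam"
    and umbilical: "\<forall>u\<in>U. \<forall>w. - covD eps f phi (normal_field f phi v1 v2 v3) u w
                                  = lam u *\<^sub>R frechet_derivative phi (at u) w"
    and v1_nz: "\<forall>u\<in>U. v1 u \<noteq> 0"
  shows "\<forall>u\<in>U. v3 u * (v2 u - v3 u)^2 * pd 1 (pd 1 (pd 1 f)) (xy (phi u)) = 0"
proof
  fix u assume u: "u \<in> U"
  show "v3 u * (v2 u - v3 u)^2 * pd 1 (pd 1 (pd 1 f)) (xy (phi u)) = 0"
  proof (cases "v2 u = v3 u")
    case False
    have phi_W: "\<And>y. y \<in> U \<Longrightarrow> xy (phi y) \<in> xy ` N"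
      using phi_N by blast
    have differentiable: "f differentiable at (xy (phi y))" "phi differentiable at y"
      "v1 differentiable at y" "v2 differentiable at y" "v3 differentiable at y" if "y \<in> U" for y
      using that phi_W open_xy_image[OF N_open] U_open f_smooth phi_smooth v_smooth
      by (auto intro: smooth_fun_on_imp_differentiable)
    interpret umbilic_structure_equations U "xy ` N" phi f v1 "\<lambda>y. v2 y - v3 y" lam "- sqrt 2"
      "eps / (2 * sqrt 2)"
      using open_xy_image[OF N_open] U_open phi_W f_smooth phi_smooth v_smooth lam_smooth
        smooth_fun_on_diff umbilic_pd_equations[OF eps differentiable] umbilical
      by unfold_locales auto
    have "jacobian2 X Y u \<noteq> 0"
      using jacobian2_nonzero_of_normal[OF differentiable(2)[OF u] immersion[rule_format, OF u]
          normal[rule_format, OF u]] False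
      by (simp add: normal_field_nth)
    then have "eps / (2 * sqrt 2) * (v2 u - v3 u) * pd 1 (pd 1 (pd 1 f)) (xy (phi u)) = 0"
      using third_derivative_vanishes[OF u] by simp
    then show ?thesis using eps False by auto
  qed simp
qed

end
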